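(* Let $X$ be a metric space with bounded geometry, $1\leq p<\infty$, and let $E$, $\pi$, $\mathcal{P}$ be as in the context. Then $\pi(\mathcal{P})E$ and the standard pair $B^p_u(X)$ are isomorphic as Banach $B^p_u(X)$-pairs, via the maps $\pi(\mathcal{P})^>E^>\to B^p_u(X)$, $\pi(\mathcal{P})^>\xi^>\mapsto[e_x^*(\xi^>_{xy})]_{x,y\in X}$, and $B^p_u(X)\to\pi(\mathcal{P})^<E^<$, $S=[S_{xy}]\mapsto[S_{xy}e_y^*]_{x,y\in X}$.
   Context: Let $1/p+1/q=1$. $X$ has bounded geometry (countable, balls of radius $R$ uniformly finite). $B^p_u(X)$ is the norm closure in $B(\ell^p(X))$ of the bounded finite-propagation operators; $UB^p(X)$ is the norm closure in $B(\ell^p(X,\ell^p))$ of bounded finite-propagation operators $T=(T_{xy})$, $T_{xy}\in B(\ell^p)$, of uniformly bounded rank. The standard $B^p_u(X)$-pair is $(B^p_u(X),B^p_u(X))$ with pairing the product. $E$: $E^>$ (resp. $E^<$) is the operator-norm completion of the finite-propagation $X\times X$ matrices with uniformly bounded entries in $\ell^p$ (resp. $\ell^q$), viewed as operators $\ell^p(X)\to\ell^p(X,\ell^p)$, $(T\eta)_x=\sum_yT_{xy}\eta_y$ (resp. $\ell^p(X,\ell^p)\to\ell^p(X)$, $(S\xi)_x=\sum_y\langle S_{xy},\xi_y\rangle$). $B^p_u(X)$ acts by composition on the right of $E^>$ and left of $E^<$, and $\langle e^<,e^>\rangle=e^<e^>$. $\pi:UB^p(X)\to\mathcal{L}(E)$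 is $\pi(T)^>e^>=Te^>$, $\pi(T)^<e^<=e^<T$. Fix an injection of $X$ into the index set of the standard basis of $\ell^p$; $e_x\in\ell^p$ and $e_x^*\in\ell^q$ are the corresponding basis vector and coordinate functional, $e_{xy}:\eta\mapsto e_y^*(\eta)e_x$, and $\mathcal{P}$ is the diagonal operator on $\ell^p(X,\ell^p)$ with $\mathcal{P}_{xx}=e_{xx}$. Thus $(\pi(\mathcal{P})^>\xi^>)_{xy}=e_x^*(\xi^>_{xy})e_x$ and $(\pi(\mathcal{P})^<\xi^<)_{xy}=\xi^<_{xy}(e_y)e_y^*$. $\pi(\mathcal{P})E$ is the $B^p_u(X)$-pair $(\pi(\mathcal{P})^<E^<,\pi(\mathcal{P})^>E^>)$ with the restricted pairing. Isomorphism of Banach pairs means module isomorphisms on each side compatible with the pairings. *)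

theory Defs
  imports "HOL-Analysis.Analysis"
begin

text \<open>Scalars are complex. Operators are represented by their matrices; the action of a
matrix on a vector is given by (absolutely convergent) infinite sums.\<close>

definition lp :: "real \<Rightarrow> ('i \<Rightarrow> complex) \<Rightarrow> bool" where
  "lp p f \<longleftrightarrow> (\<lambda>i. norm (f i) powr p) summable_on UNIV"

definition lpnorm :: "real \<Rightarrow> ('i \<Rightarrow> complex) \<Rightarrow> real" where
  "lpnorm p f = (\<Sum>\<^sub>\<infinity>i. norm (f i) powr p) powr (1 / p)"

text \<open>Conjugate exponent q = p/(p-1); q = infinity when p = 1.\<close>
definition conj_exp :: "real \<Rightarrow> real" where
  "conj_exp p = p / (p - 1)"

definition lq :: "real \<Rightarrow> ('i \<Rightarrow> complex) \<Rightarrow> bool" where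
  "lq p f \<longleftrightarrow> (if p = 1 then (\<exists>C. \<forall>i. norm (f i) \<le> C)
                  else (\<lambda>i. norm (f i) powr conj_exp p) summable_on UNIV)"

definition lqnorm :: "real \<Rightarrow> ('i \<Rightarrow> complex) \<Rightarrow> real" where
  "lqnorm p f = (if p = 1 then (SUP i. norm (f i))
                 else (\<Sum>\<^sub>\<infinity>i. norm (f i) powr conj_exp p) powr (1 / conj_exp p))"

definition lpX :: "real \<Rightarrow> ('x \<Rightarrow> complex) set" where
  "lpX p = {f. lp p f}"

definition nX :: "real \<Rightarrow> ('x \<Rightarrow> complex) \<Rightarrow> real" where
  "nX p f = lpnorm p f"

definition lpXlp :: "real \<Rightarrow> ('x \<Rightarrow> nat \<Rightarrow> complex) set" where
  "lpXlp p = {\<xi>. (\<forall>x. lp p (\<xi> x)) \<and> (\<lambda>x. lpnorm p (\<xi> x) powr p) summable_on UNIV}"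

definition nXlp :: "real \<Rightarrow> ('x \<Rightarrow> nat \<Rightarrow> complex) \<Rightarrow> real" where
  "nXlp p \<xi> = (\<Sum>\<^sub>\<infinity>x. lpnorm p (\<xi> x) powr p) powr (1 / p)"

definition op_bounded_by ::
  "'a set \<Rightarrow> ('a \<Rightarrow> real) \<Rightarrow> 'b set \<Rightarrow> ('b \<Rightarrow> real) \<Rightarrow> ('a \<Rightarrow> 'b) \<Rightarrow> real \<Rightarrow> bool" where
  "op_bounded_by V nV W nW f C \<longleftrightarrow> (\<forall>v\<in>V. f v \<in> W \<and> nW (f v) \<le> C * nV v)"

definition actB :: "('x \<Rightarrow> 'x \<Rightarrow> complex) \<Rightarrow> ('x \<Rightarrow> complex) \<Rightarrow> ('x \<Rightarrow> complex)" where
  "actB A \<eta> = (\<lambda>x. \<Sum>\<^sub>\<infinity>y. A x y * \<eta> y)"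

definition bddB :: "real \<Rightarrow> ('x \<Rightarrow> 'x \<Rightarrow> complex) \<Rightarrow> real \<Rightarrow> bool" where
  "bddB p A C \<longleftrightarrow> (\<forall>\<eta>\<in>lpX p. \<forall>x. (\<lambda>y. A x y * \<eta> y) summable_on UNIV)
     \<and> op_bounded_by (lpX p) (nX p) (lpX p) (nX p) (actB A) C"

definition fin_prop :: "('x::metric_space \<Rightarrow> 'x \<Rightarrow> complex) \<Rightarrow> bool" where
  "fin_prop A \<longleftrightarrow> (\<exists>R. \<forall>x y. R < dist x y \<longrightarrow> A x y = 0)"

definition Bpu :: "real \<Rightarrow> ('x::metric_space \<Rightarrow> 'x \<Rightarrow> complex) set" where
  "Bpu p = {A. (\<exists>C. bddB p A C) \<and>
     (\<forall>\<epsilon>>0. \<exists>G. fin_prop G \<and> (\<exists>C. bddB p G C) \<and>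
        bddB p (\<lambda>x y. A x y - G x y) \<epsilon>)}"

definition mmul :: "('x \<Rightarrow> 'x \<Rightarrow> complex) \<Rightarrow> ('x \<Rightarrow> 'x \<Rightarrow> complex) \<Rightarrow> ('x \<Rightarrow> 'x \<Rightarrow> complex)" where
  "mmul a b = (\<lambda>x y. \<Sum>\<^sub>\<infinity>z. a x z * b z y)"

definition fin_propV :: "('x::metric_space \<Rightarrow> 'x \<Rightarrow> nat \<Rightarrow> complex) \<Rightarrow> bool" where
  "fin_propV T \<longleftrightarrow> (\<exists>R. \<forall>x y. R < dist x y \<longrightarrow> (\<forall>n. T x y n = 0))"

definition actEgt :: "('x \<Rightarrow> 'x \<Rightarrow> nat \<Rightarrow> complex) \<Rightarrow> ('x \<Rightarrow> complex) \<Rightarrow> ('x \<Rightarrow> nat \<Rightarrow> complex)" where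
  "actEgt T \<eta> = (\<lambda>x n. \<Sum>\<^sub>\<infinity>y. T x y n * \<eta> y)"

definition bddEgt :: "real \<Rightarrow> ('x \<Rightarrow> 'x \<Rightarrow> nat \<Rightarrow> complex) \<Rightarrow> real \<Rightarrow> bool" where
  "bddEgt p T C \<longleftrightarrow> (\<forall>\<eta>\<in>lpX p. \<forall>x n. (\<lambda>y. T x y n * \<eta> y) summable_on UNIV)
     \<and> op_bounded_by (lpX p) (nX p) (lpXlp p) (nXlp p) (actEgt T) C"

definition Egt :: "real \<Rightarrow> ('x::metric_space \<Rightarrow> 'x \<Rightarrow> nat \<Rightarrow> complex) set" where
  "Egt p = {T. (\<exists>C. bddEgt p T C) \<and>
     (\<forall>\<epsilon>>0. \<exists>G. fin_propV G \<and> (\<exists>C. \<forall>x y. lp p (G x y) \<and> lpnorm p (G x y) \<le> C) \<and>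
        bddEgt p (\<lambda>x y n. T x y n - G x y n) \<epsilon>)}"

definition actElt :: "('x \<Rightarrow> 'x \<Rightarrow> nat \<Rightarrow> complex) \<Rightarrow> ('x \<Rightarrow> nat \<Rightarrow> complex) \<Rightarrow> ('x \<Rightarrow> complex)" where
  "actElt S \<xi> = (\<lambda>x. \<Sum>\<^sub>\<infinity>y. \<Sum>\<^sub>\<infinity>n. S x y n * \<xi> y n)"

definition bddElt :: "real \<Rightarrow> ('x \<Rightarrow> 'x \<Rightarrow> nat \<Rightarrow> complex) \<Rightarrow> real \<Rightarrow> bool" where
  "bddElt p S C \<longleftrightarrow> (\<forall>\<xi>\<in>lpXlp p. \<forall>x.
        (\<forall>y. (\<lambda>n. S x y n * \<xi> y n) summable_on UNIV) \<and>
        (\<lambda>y. \<Sum>\<^sub>\<infinity>n. S x y n * \<xi> y n) summable_on UNIV)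
     \<and> op_bounded_by (lpXlp p) (nXlp p) (lpX p) (nX p) (actElt S) C"

definition Elt :: "real \<Rightarrow> ('x::metric_space \<Rightarrow> 'x \<Rightarrow> nat \<Rightarrow> complex) set" where
  "Elt p = {S. (\<exists>C. bddElt p S C) \<and>
     (\<forall>\<epsilon>>0. \<exists>G. fin_propV G \<and> (\<exists>C. \<forall>x y. lq p (G x y) \<and> lqnorm p (G x y) \<le> C) \<and>
        bddElt p (\<lambda>x y n. S x y n - G x y n) \<epsilon>)}"

definition ract :: "('x \<Rightarrow> 'x \<Rightarrow> nat \<Rightarrow> complex) \<Rightarrow> ('x \<Rightarrow> 'x \<Rightarrow> complex) \<Rightarrow> ('x \<Rightarrow> 'x \<Rightarrow> nat \<Rightarrow> complex)" where
  "ract T b = (\<lambda>x y n. \<Sum>\<^sub>\<infinity>z. T x z n * b z y)"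

definition lact :: "('x \<Rightarrow> 'x \<Rightarrow> complex) \<Rightarrow> ('x \<Rightarrow> 'x \<Rightarrow> nat \<Rightarrow> complex) \<Rightarrow> ('x \<Rightarrow> 'x \<Rightarrow> nat \<Rightarrow> complex)" where
  "lact b S = (\<lambda>x y n. \<Sum>\<^sub>\<infinity>z. b x z * S z y n)"

definition pairing :: "('x \<Rightarrow> 'x \<Rightarrow> nat \<Rightarrow> complex) \<Rightarrow> ('x \<Rightarrow> 'x \<Rightarrow> nat \<Rightarrow> complex) \<Rightarrow> ('x \<Rightarrow> 'x \<Rightarrow> complex)" where
  "pairing S T = (\<lambda>x y. \<Sum>\<^sub>\<infinity>z. \<Sum>\<^sub>\<infinity>n. S x z n * T z y n)"

text \<open>The diagonal operator P on l^p(X,l^p): P_xx = e_xx, as a matrix with entries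
  P x y m n (block (x,y), entry (m,n) of the operator on l^p).\<close>
definition Pmat :: "('x \<Rightarrow> nat) \<Rightarrow> 'x \<Rightarrow> 'x \<Rightarrow> nat \<Rightarrow> nat \<Rightarrow> complex" where
  "Pmat \<iota> x y m n = (if x = y \<and> m = \<iota> x \<and> n = \<iota> x then 1 else 0)"

text \<open>pi(P)^> e = P e and pi(P)^< e = e P (compositions written as matrix products).\<close>
definition piG :: "('x \<Rightarrow> nat) \<Rightarrow> ('x \<Rightarrow> 'x \<Rightarrow> nat \<Rightarrow> complex) \<Rightarrow> ('x \<Rightarrow> 'x \<Rightarrow> nat \<Rightarrow> complex)" where
  "piG \<iota> T = (\<lambda>x y m. \<Sum>\<^sub>\<infinity>z. \<Sum>\<^sub>\<infinity>n. Pmat \<iota> x z m n * T z y n)"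

definition piL :: "('x \<Rightarrow> nat) \<Rightarrow> ('x \<Rightarrow> 'x \<Rightarrow> nat \<Rightarrow> complex) \<Rightarrow> ('x \<Rightarrow> 'x \<Rightarrow> nat \<Rightarrow> complex)" where
  "piL \<iota> S = (\<lambda>x y n. \<Sum>\<^sub>\<infinity>z. \<Sum>\<^sub>\<infinity>m. S x z m * Pmat \<iota> z y m n)"

definition bounded_geometry :: "'x::metric_space itself \<Rightarrow> bool" where
  "bounded_geometry _ \<longleftrightarrow> countable (UNIV :: 'x set) \<and>
     (\<forall>R. \<exists>N::nat. \<forall>x::'x. finite (cball x R) \<and> card (cball x R) \<le> N)"

end

theory Submission
  imports Defs
begin

text \<open>Both isomorphisms are coordinate maps. \<open>\<pi>(\<P>)\<close> kills every coordinate of an entry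
  \<open>\<xi>\<^sub>x\<^sub>y \<in> l\<^sup>p\<close> of a matrix in \<open>E\<^sup>>\<close> except \<open>\<iota> x\<close>, and every coordinate of an entry of a
  matrix in \<open>E\<^sup><\<close> except \<open>\<iota> y\<close>, so both halves of \<open>\<pi>(\<P>)E\<close> consist of scalar matrices placed
  on one coordinate per entry. A vector of \<open>l\<^sup>p(X,l\<^sup>p)\<close> supported on one coordinate per point
  has the norm of the scalar sequence of these coordinates; hence placing and reading off
  coordinates preserve operator bounds exactly (\<open>K = 1\<close>) in both directions, and they commute
  with finite propagation, hence with the approximations defining \<open>B\<^sup>p\<^sub>u(X)\<close>, \<open>E\<^sup>>\<close> and \<open>E\<^sup><\<close>.\<close>

lemma infsum_delta:
  fixes c :: "'b::{comm_monoid_add,t2_space}"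
  shows "(\<Sum>\<^sub>\<infinity>n. if n = k then c else 0) = c"
proof -
  have "(\<Sum>\<^sub>\<infinity>n. if n = k then c else 0) = (\<Sum>\<^sub>\<infinity>n\<in>{k}. if n = k then c else 0)"
    by (rule infsum_cong_neutral) auto
  then show ?thesis by simp
qed

lemma summable_on_delta:
  fixes c :: "'b::{comm_monoid_add,t2_space}"
  shows "(\<lambda>n. if n = k then c else 0) summable_on UNIV"
proof -
  have "(\<lambda>n. if n = k then c else 0) summable_on {k}" by simp
  then show ?thesis
    by (rule summable_on_cong_neutral[THEN iffD1, rotated -1]) auto
qed

lemma
  fixes f g :: "'a \<Rightarrow> 'b::{topological_ab_group_add,t2_space}"
  assumes "f summable_on A" "g summable_on A"
  shows summable_on_diff: "(\<lambda>x. f x - g x) summable_on A"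
    and infsum_diff: "(\<Sum>\<^sub>\<infinity>x\<in>A. f x - g x) = infsum f A - infsum g A"
  using summable_on_add[OF assms(1) summable_on_uminus[THEN iffD2, OF assms(2)]]
    infsum_add[OF assms(1) summable_on_uminus[THEN iffD2, OF assms(2)]]
  by (simp_all add: infsum_uminus)

lemma lpnorm_nonneg: "0 \<le> lpnorm p f"
  by (simp add: lpnorm_def)

lemma norm_powr_delta:
  "(\<lambda>n. norm (if n = k then c else 0) powr p) = (\<lambda>n. if n = k then norm c powr p else 0)"
  by auto

lemma lp_delta: "lp p (\<lambda>n. if n = k then c else 0)"
  unfolding lp_def norm_powr_delta by (rule summable_on_delta)

lemma lpnorm_delta:
  assumes "p > 0"
  shows "lpnorm p (\<lambda>n. if n = k then c else 0) = norm c"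
  using assms unfolding lpnorm_def norm_powr_delta by (simp add: infsum_delta powr_powr)

lemma lq_delta: "lq p (\<lambda>n. if n = k then c else 0)"
  unfolding lq_def norm_powr_delta
  by (auto simp: summable_on_delta intro: exI[of _ "norm c"])

lemma lqnorm_delta:
  assumes "p \<ge> 1"
  shows "lqnorm p (\<lambda>n. if n = k then c else 0) = norm c"
proof (cases "p = 1")
  case True
  have "(SUP n. norm (if n = k then c else 0)) = norm c"
  proof (rule antisym)
    show "(SUP n. norm (if n = k then c else 0)) \<le> norm c"
      by (intro cSUP_least) auto
    have "bdd_above (range (\<lambda>n. norm (if n = k then c else 0)))"
      by (intro bdd_aboveI[of _ "norm c"]) auto
    then show "norm c \<le> (SUP n. norm (if n = k then c else 0))"
      using cSUP_upper[of k UNIV] by force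
  qed
  then show ?thesis using True by (simp add: lqnorm_def)
next
  case False
  then have "conj_exp p > 0" using assms by (simp add: conj_exp_def)
  then show ?thesis
    using False unfolding lqnorm_def norm_powr_delta by (simp add: infsum_delta powr_powr)
qed

lemma norm_le_lpnorm:
  assumes "lp p f" "p > 0"
  shows "norm (f i) \<le> lpnorm p f"
proof -
  have "(\<Sum>\<^sub>\<infinity>n\<in>{i}. norm (f n) powr p) \<le> (\<Sum>\<^sub>\<infinity>n. norm (f n) powr p)"
    using assms(1) unfolding lp_def by (intro infsum_mono_neutral) auto
  then have "(norm (f i) powr p) powr (1/p) \<le> (\<Sum>\<^sub>\<infinity>n. norm (f n) powr p) powr (1/p)"
    using assms(2) by (intro powr_mono2) auto
  then show ?thesis using assms(2) by (simp add: powr_powr lpnorm_def)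
qed

text \<open>Only boundedness of the finite-propagation approximants is at stake, so this
  quasi-triangle inequality can replace Minkowski's.\<close>

lemma lp_diff_lpnorm_le:
  assumes "lp p u" "lp p v" "p \<ge> 1"
  shows "lp p (\<lambda>i. u i - v i) \<and> lpnorm p (\<lambda>i. u i - v i) \<le> 4 * (lpnorm p u + lpnorm p v)"
proof -
  define U where "U = (\<Sum>\<^sub>\<infinity>i. norm (u i) powr p)"
  define V where "V = (\<Sum>\<^sub>\<infinity>i. norm (v i) powr p)"
  have su: "(\<lambda>i. norm (u i) powr p) summable_on UNIV"
    and sv: "(\<lambda>i. norm (v i) powr p) summable_on UNIV"
    using assms by (auto simp: lp_def)
  have UV: "U \<ge> 0" "V \<ge> 0" unfolding U_def V_def by (auto intro: infsum_nonneg)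
  have pointwise: "norm (u i - v i) powr p \<le> 2 powr p * (norm (u i) powr p + norm (v i) powr p)" for i
  proof -
    have "norm (u i - v i) powr p \<le> (2 * max (norm (u i)) (norm (v i))) powr p"
      using norm_triangle_ineq4[of "u i" "v i"] assms(3) by (intro powr_mono2) auto
    also have "\<dots> = 2 powr p * max (norm (u i)) (norm (v i)) powr p"
      by (simp add: powr_mult)
    also have "max (norm (u i)) (norm (v i)) powr p \<le> norm (u i) powr p + norm (v i) powr p"
      by (simp add: max_def)
    finally show ?thesis by simp
  qed
  have sb: "(\<lambda>i. 2 powr p * (norm (u i) powr p + norm (v i) powr p)) summable_on UNIV"
    by (intro summable_on_cmult_right summable_on_add su sv)
  have sd: "(\<lambda>i. norm (u i - v i) powr p) summable_on UNIV"
    by (rule summable_on_comparison_test[OF sb]) (use pointwise in auto)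
  have "(\<Sum>\<^sub>\<infinity>i. norm (u i - v i) powr p) \<le> 2 powr p * (U + V)"
    using infsum_mono[OF sd sb pointwise]
    by (simp add: U_def V_def infsum_cmult_right' infsum_add[OF su sv])
  then have "(\<Sum>\<^sub>\<infinity>i. norm (u i - v i) powr p) powr (1/p) \<le> (2 powr p * (U + V)) powr (1/p)"
    using assms(3) by (intro powr_mono2) (auto intro: infsum_nonneg)
  also have "\<dots> = 2 * (U + V) powr (1/p)"
    using assms(3) UV by (simp add: powr_mult powr_powr)
  also have "(U + V) powr (1/p) \<le> (2 * max U V) powr (1/p)"
    using assms(3) UV by (intro powr_mono2) auto
  also have "\<dots> = 2 powr (1/p) * max U V powr (1/p)"
    using UV by (simp add: powr_mult)
  also have "\<dots> \<le> 2 * (U powr (1/p) + V powr (1/p))"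
  proof (rule mult_mono)
    show "2 powr (1/p) \<le> (2::real)"
      using powr_mono[of "1/p" 1 2] assms(3) by simp
  qed (auto simp: max_def)
  finally show ?thesis
    using sd unfolding lp_def lpnorm_def U_def V_def by simp
qed

lemma lpXlp_delta_iff:
  assumes "p > 0"
  shows "(\<lambda>x n. if n = k x then a x else 0) \<in> lpXlp p \<longleftrightarrow> lp p a"
  using assms unfolding lpXlp_def lp_def[of p a] by (simp add: lp_delta lpnorm_delta)

lemma nXlp_delta:
  assumes "p > 0"
  shows "nXlp p (\<lambda>x n. if n = k x then a x else 0) = lpnorm p a"
  using assms unfolding nXlp_def lpnorm_def[of p a] by (simp add: lpnorm_delta)

lemma lp_coordinates:
  assumes "\<xi> \<in> lpXlp p" "p > 0"
  shows "lp p (\<lambda>x. \<xi> x (k x)) \<and> lpnorm p (\<lambda>x. \<xi> x (k x)) \<le> nXlp p \<xi>"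
proof -
  have s: "(\<lambda>x. lpnorm p (\<xi> x) powr p) summable_on UNIV" and l: "\<And>x. lp p (\<xi> x)"
    using assms(1) by (auto simp: lpXlp_def)
  have le: "norm (\<xi> x (k x)) powr p \<le> lpnorm p (\<xi> x) powr p" for x
    using norm_le_lpnorm[OF l assms(2)] assms(2) by (intro powr_mono2) auto
  have s': "(\<lambda>x. norm (\<xi> x (k x)) powr p) summable_on UNIV"
    by (rule summable_on_comparison_test[OF s]) (use le in auto)
  have "(\<Sum>\<^sub>\<infinity>x. norm (\<xi> x (k x)) powr p) powr (1/p) \<le> (\<Sum>\<^sub>\<infinity>x. lpnorm p (\<xi> x) powr p) powr (1/p)"
    using assms(2) infsum_mono[OF s' s le] by (intro powr_mono2) (auto intro: infsum_nonneg)
  then show ?thesis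
    using s' unfolding lp_def lpnorm_def[of p "\<lambda>x. \<xi> x (k x)"] nXlp_def by simp
qed

section \<open>Bounded operators on \<open>l\<^sup>p(X)\<close>\<close>

lemma delta_lpX:
  assumes "p > 0"
  shows "(\<lambda>y. if y = y0 then 1 else 0) \<in> lpX p" "nX p (\<lambda>y. if y = y0 then 1 else 0) = 1"
  using lp_delta lpnorm_delta[OF assms, of y0 1] by (simp_all add: lpX_def nX_def)

lemma actB_delta: "actB A (\<lambda>z. if z = y then 1 else 0) x = A x y"
  unfolding actB_def by (simp add: if_distrib[of "\<lambda>c. A x _ * c"] infsum_delta cong: if_cong)

lemma bddB_nonneg:
  assumes "bddB p A C" "p > 0"
  shows "0 \<le> C"
  using assms delta_lpX[OF assms(2), of undefined] lpnorm_nonneg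
  unfolding bddB_def op_bounded_by_def nX_def by (metis mult.right_neutral order.trans)

lemma norm_entry_le_bddB:
  assumes "bddB p A C" "p > 0"
  shows "norm (A x y) \<le> C"
proof -
  let ?\<delta> = "\<lambda>z. if z = y then 1 else 0"
  have "actB A ?\<delta> \<in> lpX p" "nX p (actB A ?\<delta>) \<le> C"
    using assms delta_lpX[OF assms(2), of y] unfolding bddB_def op_bounded_by_def by force+
  then show ?thesis
    using norm_le_lpnorm[of p "actB A ?\<delta>" x] assms(2) by (simp add: lpX_def nX_def actB_delta)
qed

lemma bddB_diff:
  fixes A G :: "'x \<Rightarrow> 'x \<Rightarrow> complex"
  assumes "bddB p A C1" "bddB p (\<lambda>x y. A x y - G x y) C2" "p \<ge> 1"
  shows "bddB p G (4 * (C1 + C2))"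
  unfolding bddB_def op_bounded_by_def
proof (intro conjI ballI allI)
  fix \<eta> :: "'x \<Rightarrow> complex" and x assume \<eta>: "\<eta> \<in> lpX p"
  have s1: "(\<lambda>y. A x y * \<eta> y) summable_on UNIV" for x
    using assms(1) \<eta> by (auto simp: bddB_def)
  have s2: "(\<lambda>y. (A x y - G x y) * \<eta> y) summable_on UNIV" for x
    using assms(2) \<eta> by (auto simp: bddB_def)
  have G: "G x y * \<eta> y = A x y * \<eta> y - (A x y - G x y) * \<eta> y" for x y
    by (simp add: algebra_simps)
  show "(\<lambda>y. G x y * \<eta> y) summable_on UNIV"
    unfolding G by (rule summable_on_diff[OF s1 s2])
  have act: "actB G \<eta> = (\<lambda>x. actB A \<eta> x - actB (\<lambda>x y. A x y - G x y) \<eta> x)"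
    unfolding actB_def G by (simp add: infsum_diff[OF s1 s2])
  have "actB A \<eta> \<in> lpX p" "nX p (actB A \<eta>) \<le> C1 * nX p \<eta>"
    and "actB (\<lambda>x y. A x y - G x y) \<eta> \<in> lpX p"
      "nX p (actB (\<lambda>x y. A x y - G x y) \<eta>) \<le> C2 * nX p \<eta>"
    using assms(1,2) \<eta> unfolding bddB_def op_bounded_by_def by auto
  then show "actB G \<eta> \<in> lpX p" "nX p (actB G \<eta>) \<le> 4 * (C1 + C2) * nX p \<eta>"
    unfolding act using lp_diff_lpnorm_le[OF _ _ assms(3)]
    by (fastforce simp: lpX_def nX_def algebra_simps)+
qed

lemma BpuI:
  assumes "p \<ge> 1" "bddB p A C"
    and "\<And>\<epsilon>. \<epsilon> > 0 \<Longrightarrow> \<exists>G. fin_prop G \<and> bddB p (\<lambda>x y. A x y - G x y) \<epsilon>"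
  shows "A \<in> Bpu p"
  unfolding Bpu_def using assms bddB_diff[OF assms(2) _ assms(1)] by blast

section \<open>Placing a scalar matrix on one coordinate per entry\<close>

text \<open>\<open>embed_Egt k A\<close> has entries \<open>A\<^sub>x\<^sub>y e\<^bsub>k x\<^esub>\<close> and \<open>embed_Elt k A\<close> has entries \<open>A\<^sub>x\<^sub>y e\<^sup>*\<^bsub>k y\<^esub>\<close>,
  functionals on \<open>l\<^sup>p\<close> being represented by their coefficient sequences.\<close>

definition embed_Egt :: "('x \<Rightarrow> nat) \<Rightarrow> ('x \<Rightarrow> 'x \<Rightarrow> complex) \<Rightarrow> 'x \<Rightarrow> 'x \<Rightarrow> nat \<Rightarrow> complex" where
  "embed_Egt k A = (\<lambda>x y n. if n = k x then A x y else 0)"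

definition embed_Elt :: "('x \<Rightarrow> nat) \<Rightarrow> ('x \<Rightarrow> 'x \<Rightarrow> complex) \<Rightarrow> 'x \<Rightarrow> 'x \<Rightarrow> nat \<Rightarrow> complex" where
  "embed_Elt k A = (\<lambda>x y n. if n = k y then A x y else 0)"

definition coord_Egt :: "('x \<Rightarrow> nat) \<Rightarrow> ('x \<Rightarrow> 'x \<Rightarrow> nat \<Rightarrow> complex) \<Rightarrow> 'x \<Rightarrow> 'x \<Rightarrow> complex" where
  "coord_Egt k T = (\<lambda>x y. T x y (k x))"

definition coord_Elt :: "('x \<Rightarrow> nat) \<Rightarrow> ('x \<Rightarrow> 'x \<Rightarrow> nat \<Rightarrow> complex) \<Rightarrow> 'x \<Rightarrow> 'x \<Rightarrow> complex" where
  "coord_Elt k S = (\<lambda>x y. S x y (k y))"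

lemma coord_embed_Egt [simp]: "coord_Egt k (embed_Egt k A) = A"
  by (simp add: coord_Egt_def embed_Egt_def)

lemma coord_embed_Elt [simp]: "coord_Elt k (embed_Elt k A) = A"
  by (simp add: coord_Elt_def embed_Elt_def)

lemma embed_Egt_diff:
  "embed_Egt k (\<lambda>x y. A x y - G x y) = (\<lambda>x y n. embed_Egt k A x y n - embed_Egt k G x y n)"
  by (auto simp: embed_Egt_def intro!: ext)

lemma embed_Elt_diff:
  "embed_Elt k (\<lambda>x y. A x y - G x y) = (\<lambda>x y n. embed_Elt k A x y n - embed_Elt k G x y n)"
  by (auto simp: embed_Elt_def intro!: ext)

lemma inj_embed_Elt: "inj (embed_Elt k)"
  by (metis coord_embed_Elt injI)

lemma bij_betw_coord_Egt: "bij_betw (coord_Egt k) (embed_Egt k ` B) B"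
  by (rule bij_betw_byWitness[where f' = "embed_Egt k"]) auto

lemma bddEgt_embed_Egt:
  fixes A :: "'x \<Rightarrow> 'x \<Rightarrow> complex"
  assumes "bddB p A C" "p > 0"
  shows "bddEgt p (embed_Egt k A) C"
  unfolding bddEgt_def op_bounded_by_def
proof (intro conjI ballI allI)
  fix \<eta> :: "'x \<Rightarrow> complex" and x n assume \<eta>: "\<eta> \<in> lpX p"
  show "(\<lambda>y. embed_Egt k A x y n * \<eta> y) summable_on UNIV"
    using assms(1) \<eta> by (cases "n = k x") (auto simp: embed_Egt_def bddB_def)
  have act: "actEgt (embed_Egt k A) \<eta> = (\<lambda>x n. if n = k x then actB A \<eta> x else 0)"
    by (auto simp: actEgt_def actB_def embed_Egt_def intro!: ext)
  have "actB A \<eta> \<in> lpX p" "nX p (actB A \<eta>) \<le> C * nX p \<eta>"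
    using assms(1) \<eta> unfolding bddB_def op_bounded_by_def by auto
  then show "actEgt (embed_Egt k A) \<eta> \<in> lpXlp p" "nXlp p (actEgt (embed_Egt k A) \<eta>) \<le> C * nX p \<eta>"
    unfolding act using assms(2) by (simp_all add: lpXlp_delta_iff nXlp_delta lpX_def nX_def)
qed

lemma bddB_coord_Egt:
  fixes T :: "'x \<Rightarrow> 'x \<Rightarrow> nat \<Rightarrow> complex"
  assumes "bddEgt p T C" "p > 0"
  shows "bddB p (coord_Egt k T) C"
  unfolding bddB_def op_bounded_by_def
proof (intro conjI ballI allI)
  fix \<eta> :: "'x \<Rightarrow> complex" and x assume \<eta>: "\<eta> \<in> lpX p"
  show "(\<lambda>y. coord_Egt k T x y * \<eta> y) summable_on UNIV"
    using assms(1) \<eta> by (auto simp: bddEgt_def coord_Egt_def)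
  have act: "actB (coord_Egt k T) \<eta> = (\<lambda>x. actEgt T \<eta> x (k x))"
    by (simp add: actEgt_def actB_def coord_Egt_def)
  have "actEgt T \<eta> \<in> lpXlp p" "nXlp p (actEgt T \<eta>) \<le> C * nX p \<eta>"
    using assms(1) \<eta> unfolding bddEgt_def op_bounded_by_def by auto
  then show "actB (coord_Egt k T) \<eta> \<in> lpX p" "nX p (actB (coord_Egt k T) \<eta>) \<le> C * nX p \<eta>"
    unfolding act using lp_coordinates[OF _ assms(2), of "actEgt T \<eta>" k]
    by (auto simp: lpX_def nX_def)
qed

lemma bddElt_embed_Elt:
  fixes A :: "'x \<Rightarrow> 'x \<Rightarrow> complex"
  assumes "bddB p A C" "p > 0"
  shows "bddElt p (embed_Elt k A) C"
  unfolding bddElt_def op_bounded_by_def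
proof (intro conjI ballI allI)
  fix \<xi> :: "'x \<Rightarrow> nat \<Rightarrow> complex" and x assume \<xi>: "\<xi> \<in> lpXlp p"
  define \<eta> where "\<eta> = (\<lambda>y. \<xi> y (k y))"
  have \<eta>: "\<eta> \<in> lpX p" "nX p \<eta> \<le> nXlp p \<xi>"
    using lp_coordinates[OF \<xi> assms(2)] unfolding \<eta>_def lpX_def nX_def by auto
  have terms: "(\<lambda>n. embed_Elt k A x y n * \<xi> y n) = (\<lambda>n. if n = k y then A x y * \<eta> y else 0)" for x y
    by (auto simp: embed_Elt_def \<eta>_def)
  show "(\<lambda>n. embed_Elt k A x y n * \<xi> y n) summable_on UNIV" for y
    unfolding terms by (rule summable_on_delta)
  show "(\<lambda>y. \<Sum>\<^sub>\<infinity>n. embed_Elt k A x y n * \<xi> y n) summable_on UNIV"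
    using assms(1) \<eta>(1) unfolding terms by (simp add: infsum_delta bddB_def)
  have act: "actElt (embed_Elt k A) \<xi> = actB A \<eta>"
    unfolding actElt_def actB_def terms by (simp add: infsum_delta)
  have "actB A \<eta> \<in> lpX p" "nX p (actB A \<eta>) \<le> C * nX p \<eta>"
    using assms(1) \<eta>(1) unfolding bddB_def op_bounded_by_def by auto
  moreover have "C * nX p \<eta> \<le> C * nXlp p \<xi>"
    using \<eta>(2) bddB_nonneg[OF assms] by (rule mult_left_mono)
  ultimately show "actElt (embed_Elt k A) \<xi> \<in> lpX p"
    "nX p (actElt (embed_Elt k A) \<xi>) \<le> C * nXlp p \<xi>"
    unfolding act by simp_all
qed

lemma bddB_coord_Elt:
  fixes S :: "'x \<Rightarrow> 'x \<Rightarrow> nat \<Rightarrow> complex"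
  assumes "bddElt p S C" "p > 0"
  shows "bddB p (coord_Elt k S) C"
  unfolding bddB_def op_bounded_by_def
proof (intro conjI ballI allI)
  fix \<eta> :: "'x \<Rightarrow> complex" and x assume \<eta>: "\<eta> \<in> lpX p"
  define \<xi> where "\<xi> = (\<lambda>y n. if n = k y then \<eta> y else 0)"
  have \<xi>: "\<xi> \<in> lpXlp p" "nXlp p \<xi> = nX p \<eta>"
    using \<eta> assms(2) unfolding \<xi>_def by (simp_all add: lpXlp_delta_iff nXlp_delta lpX_def nX_def)
  have terms: "(\<Sum>\<^sub>\<infinity>n. S x y n * \<xi> y n) = coord_Elt k S x y * \<eta> y" for x y
    unfolding \<xi>_def coord_Elt_def
    by (simp add: if_distrib[of "\<lambda>c. S x y _ * c"] infsum_delta cong: if_cong)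
  show "(\<lambda>y. coord_Elt k S x y * \<eta> y) summable_on UNIV"
    using assms(1) \<xi>(1) by (auto simp: bddElt_def simp flip: terms)
  have act: "actB (coord_Elt k S) \<eta> = actElt S \<xi>"
    by (simp add: actB_def actElt_def terms)
  have "actElt S \<xi> \<in> lpX p" "nX p (actElt S \<xi>) \<le> C * nXlp p \<xi>"
    using assms(1) \<xi>(1) unfolding bddElt_def op_bounded_by_def by auto
  then show "actB (coord_Elt k S) \<eta> \<in> lpX p" "nX p (actB (coord_Elt k S) \<eta>) \<le> C * nX p \<eta>"
    unfolding act \<xi>(2) by simp_all
qed

section \<open>The two halves of \<open>\<pi>(\<P>)E\<close>\<close>

lemma coord_Egt_in_Bpu:
  fixes T :: "'x::metric_space \<Rightarrow> 'x \<Rightarrow> nat \<Rightarrow> complex"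
  assumes "T \<in> Egt p" "p \<ge> 1"
  shows "coord_Egt k T \<in> Bpu p"
proof -
  have p0: "p > 0" using assms(2) by simp
  obtain C where C: "bddEgt p T C" using assms(1) by (auto simp: Egt_def)
  show ?thesis
  proof (rule BpuI[OF assms(2) bddB_coord_Egt[OF C p0]])
    fix \<epsilon> :: real assume "\<epsilon> > 0"
    then obtain G where G: "fin_propV G" "bddEgt p (\<lambda>x y n. T x y n - G x y n) \<epsilon>"
      using assms(1) unfolding Egt_def by blast
    have "fin_prop (coord_Egt k G)"
      using G(1) unfolding fin_propV_def fin_prop_def coord_Egt_def by blast
    moreover have "bddB p (\<lambda>x y. coord_Egt k T x y - coord_Egt k G x y) \<epsilon>"
      using bddB_coord_Egt[OF G(2) p0, of k] by (simp add: coord_Egt_def)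
    ultimately show "\<exists>G. fin_prop G \<and> bddB p (\<lambda>x y. coord_Egt k T x y - G x y) \<epsilon>"
      by blast
  qed
qed

lemma coord_Elt_in_Bpu:
  fixes S :: "'x::metric_space \<Rightarrow> 'x \<Rightarrow> nat \<Rightarrow> complex"
  assumes "S \<in> Elt p" "p \<ge> 1"
  shows "coord_Elt k S \<in> Bpu p"
proof -
  have p0: "p > 0" using assms(2) by simp
  obtain C where C: "bddElt p S C" using assms(1) by (auto simp: Elt_def)
  show ?thesis
  proof (rule BpuI[OF assms(2) bddB_coord_Elt[OF C p0]])
    fix \<epsilon> :: real assume "\<epsilon> > 0"
    then obtain G where G: "fin_propV G" "bddElt p (\<lambda>x y n. S x y n - G x y n) \<epsilon>"
      using assms(1) unfolding Elt_def by blast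
    have "fin_prop (coord_Elt k G)"
      using G(1) unfolding fin_propV_def fin_prop_def coord_Elt_def by blast
    moreover have "bddB p (\<lambda>x y. coord_Elt k S x y - coord_Elt k G x y) \<epsilon>"
      using bddB_coord_Elt[OF G(2) p0, of k] by (simp add: coord_Elt_def)
    ultimately show "\<exists>G. fin_prop G \<and> bddB p (\<lambda>x y. coord_Elt k S x y - G x y) \<epsilon>"
      by blast
  qed
qed

lemma embed_Egt_in_Egt:
  fixes A :: "'x::metric_space \<Rightarrow> 'x \<Rightarrow> complex"
  assumes "A \<in> Bpu p" "p \<ge> 1"
  shows "embed_Egt k A \<in> Egt p"
proof -
  have p0: "p > 0" using assms(2) by simp
  obtain C where C: "bddB p A C" using assms(1) by (auto simp: Bpu_def)
  have "\<exists>G. fin_propV G \<and> (\<exists>C. \<forall>x y. lp p (G x y) \<and> lpnorm p (G x y) \<le> C) \<and>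
      bddEgt p (\<lambda>x y n. embed_Egt k A x y n - G x y n) \<epsilon>" if "\<epsilon> > 0" for \<epsilon>
  proof -
    obtain G C' where G: "fin_prop G" "bddB p G C'" "bddB p (\<lambda>x y. A x y - G x y) \<epsilon>"
      using assms(1) \<open>\<epsilon> > 0\<close> unfolding Bpu_def by blast
    have "fin_propV (embed_Egt k G)"
      using G(1) unfolding fin_propV_def fin_prop_def embed_Egt_def by auto
    moreover have "\<forall>x y. lp p (embed_Egt k G x y) \<and> lpnorm p (embed_Egt k G x y) \<le> C'"
      by (simp add: embed_Egt_def lp_delta lpnorm_delta[OF p0] norm_entry_le_bddB[OF G(2) p0])
    moreover have "bddEgt p (\<lambda>x y n. embed_Egt k A x y n - embed_Egt k G x y n) \<epsilon>"
      using bddEgt_embed_Egt[OF G(3) p0, of k] by (simp add: embed_Egt_diff)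
    ultimately show ?thesis by blast
  qed
  then show ?thesis using bddEgt_embed_Egt[OF C p0] unfolding Egt_def by blast
qed

lemma embed_Elt_in_Elt:
  fixes A :: "'x::metric_space \<Rightarrow> 'x \<Rightarrow> complex"
  assumes "A \<in> Bpu p" "p \<ge> 1"
  shows "embed_Elt k A \<in> Elt p"
proof -
  have p0: "p > 0" using assms(2) by simp
  obtain C where C: "bddB p A C" using assms(1) by (auto simp: Bpu_def)
  have "\<exists>G. fin_propV G \<and> (\<exists>C. \<forall>x y. lq p (G x y) \<and> lqnorm p (G x y) \<le> C) \<and>
      bddElt p (\<lambda>x y n. embed_Elt k A x y n - G x y n) \<epsilon>" if "\<epsilon> > 0" for \<epsilon>
  proof -
    obtain G C' where G: "fin_prop G" "bddB p G C'" "bddB p (\<lambda>x y. A x y - G x y) \<epsilon>"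
      using assms(1) \<open>\<epsilon> > 0\<close> unfolding Bpu_def by blast
    have "fin_propV (embed_Elt k G)"
      using G(1) unfolding fin_propV_def fin_prop_def embed_Elt_def by auto
    moreover have "\<forall>x y. lq p (embed_Elt k G x y) \<and> lqnorm p (embed_Elt k G x y) \<le> C'"
      by (simp add: embed_Elt_def lq_delta lqnorm_delta[OF assms(2)] norm_entry_le_bddB[OF G(2) p0])
    moreover have "bddElt p (\<lambda>x y n. embed_Elt k A x y n - embed_Elt k G x y n) \<epsilon>"
      using bddElt_embed_Elt[OF G(3) p0, of k] by (simp add: embed_Elt_diff)
    ultimately show ?thesis by blast
  qed
  then show ?thesis using bddElt_embed_Elt[OF C p0] unfolding Elt_def by blast
qed

lemma piG_eq: "piG \<iota> T = embed_Egt \<iota> (coord_Egt \<iota> T)"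
proof (intro ext)
  fix x y m
  have "(\<Sum>\<^sub>\<infinity>n. Pmat \<iota> x z m n * T z y n) = (if z = x then embed_Egt \<iota> (coord_Egt \<iota> T) x y m else 0)" for z
  proof -
    have "(\<lambda>n. Pmat \<iota> x z m n * T z y n)
        = (\<lambda>n. if n = \<iota> x then (if z = x then embed_Egt \<iota> (coord_Egt \<iota> T) x y m else 0) else 0)"
      by (auto simp: Pmat_def embed_Egt_def coord_Egt_def)
    then show ?thesis by (simp add: infsum_delta)
  qed
  then show "piG \<iota> T x y m = embed_Egt \<iota> (coord_Egt \<iota> T) x y m"
    by (simp add: piG_def infsum_delta)
qed

lemma piL_eq: "piL \<iota> S = embed_Elt \<iota> (coord_Elt \<iota> S)"
proof (intro ext)
  fix x y n
  have "(\<Sum>\<^sub>\<infinity>m. S x z m * Pmat \<iota> z y m n) = (if z = y then embed_Elt \<iota> (coord_Elt \<iota> S) x y n else 0)" for z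
  proof -
    have "(\<lambda>m. S x z m * Pmat \<iota> z y m n)
        = (\<lambda>m. if m = \<iota> z then (if z = y then embed_Elt \<iota> (coord_Elt \<iota> S) x y n else 0) else 0)"
      by (auto simp: Pmat_def embed_Elt_def coord_Elt_def)
    then show ?thesis by (simp add: infsum_delta)
  qed
  then show "piL \<iota> S x y n = embed_Elt \<iota> (coord_Elt \<iota> S) x y n"
    by (simp add: piL_def infsum_delta)
qed

lemma piG_image_Egt:
  assumes "p \<ge> 1"
  shows "piG \<iota> ` Egt p = embed_Egt \<iota> ` Bpu p"
proof
  show "piG \<iota> ` Egt p \<subseteq> embed_Egt \<iota> ` Bpu p"
    using coord_Egt_in_Bpu[OF _ assms] by (auto simp: piG_eq)
  show "embed_Egt \<iota> ` Bpu p \<subseteq> piG \<iota> ` Egt p"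
    using embed_Egt_in_Egt[OF _ assms] by (metis coord_embed_Egt image_eqI image_subsetI piG_eq)
qed

lemma piL_image_Elt:
  assumes "p \<ge> 1"
  shows "piL \<iota> ` Elt p = embed_Elt \<iota> ` Bpu p"
proof
  show "piL \<iota> ` Elt p \<subseteq> embed_Elt \<iota> ` Bpu p"
    using coord_Elt_in_Bpu[OF _ assms] by (auto simp: piL_eq)
  show "embed_Elt \<iota> ` Bpu p \<subseteq> piL \<iota> ` Elt p"
    using embed_Elt_in_Elt[OF _ assms] by (metis coord_embed_Elt image_eqI image_subsetI piL_eq)
qed

lemma coord_Egt_ract: "coord_Egt k (ract T b) = mmul (coord_Egt k T) b"
  by (simp add: coord_Egt_def ract_def mmul_def)

lemma embed_Elt_mmul: "embed_Elt k (mmul b S) = lact b (embed_Elt k S)"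
  by (auto simp: embed_Elt_def mmul_def lact_def intro!: ext)

lemma pairing_embed_Elt: "pairing (embed_Elt k S) T = mmul S (coord_Egt k T)"
proof (intro ext)
  fix x y
  have "(\<Sum>\<^sub>\<infinity>n. embed_Elt k S x z n * T z y n) = S x z * coord_Egt k T z y" for z
  proof -
    have "(\<lambda>n. embed_Elt k S x z n * T z y n) = (\<lambda>n. if n = k z then S x z * coord_Egt k T z y else 0)"
      by (auto simp: embed_Elt_def coord_Egt_def)
    then show ?thesis by (simp add: infsum_delta)
  qed
  then show "pairing (embed_Elt k S) T x y = mmul S (coord_Egt k T) x y"
    by (simp add: pairing_def mmul_def)
qed

theorem lemma4p3:
  fixes p :: real and \<iota> :: "'x::metric_space \<Rightarrow> nat"
    and \<Phi> :: "('x \<Rightarrow> 'x \<Rightarrow> nat \<Rightarrow> complex) \<Rightarrow> ('x \<Rightarrow> 'x \<Rightarrow> complex)"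
    and \<Psi> :: "('x \<Rightarrow> 'x \<Rightarrow> complex) \<Rightarrow> ('x \<Rightarrow> 'x \<Rightarrow> nat \<Rightarrow> complex)"
  assumes bg: "bounded_geometry TYPE('x)"
    and p: "1 \<le> p"
    and inj: "inj \<iota>"
    and Phi_def: "\<Phi> = (\<lambda>\<xi> x y. \<xi> x y (\<iota> x))"
    and Psi_def: "\<Psi> = (\<lambda>S x y n. S x y * (if n = \<iota> y then 1 else 0))"
  shows
    \<comment> \<open>right side: pi(P)^> E^> \<cong> B^p_u(X) as right Banach modules\<close>
    "bij_betw \<Phi> (piG \<iota> ` Egt p) (Bpu p)
     \<and> (\<forall>\<xi>\<in>piG \<iota> ` Egt p. \<forall>\<xi>'\<in>piG \<iota> ` Egt p. \<forall>c a.
          \<Phi> (\<lambda>x y n. c * \<xi> x y n + a * \<xi>' x y n) = (\<lambda>x y. c * \<Phi> \<xi> x y + a * \<Phi> \<xi>' x y))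
     \<and> (\<forall>\<xi>\<in>piG \<iota> ` Egt p. \<forall>b\<in>Bpu p. \<Phi> (ract \<xi> b) = mmul (\<Phi> \<xi>) b)
     \<and> (\<exists>K. \<forall>\<xi>\<in>piG \<iota> ` Egt p. \<forall>C. bddEgt p \<xi> C \<longrightarrow> bddB p (\<Phi> \<xi>) (K * C))
     \<and> (\<exists>K. \<forall>\<xi>\<in>piG \<iota> ` Egt p. \<forall>C. bddB p (\<Phi> \<xi>) C \<longrightarrow> bddEgt p \<xi> (K * C))
     \<comment> \<open>left side: B^p_u(X) \<cong> pi(P)^< E^< as left Banach modules\<close>
     \<and> bij_betw \<Psi> (Bpu p) (piL \<iota> ` Elt p)
     \<and> (\<forall>S\<in>Bpu p. \<forall>S'\<in>Bpu p. \<forall>c a.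
          \<Psi> (\<lambda>x y. c * S x y + a * S' x y) = (\<lambda>x y n. c * \<Psi> S x y n + a * \<Psi> S' x y n))
     \<and> (\<forall>b\<in>Bpu p. \<forall>S\<in>Bpu p. \<Psi> (mmul b S) = lact b (\<Psi> S))
     \<and> (\<exists>K. \<forall>S\<in>Bpu p. \<forall>C. bddB p S C \<longrightarrow> bddElt p (\<Psi> S) (K * C))
     \<and> (\<exists>K. \<forall>S\<in>Bpu p. \<forall>C. bddElt p (\<Psi> S) C \<longrightarrow> bddB p S (K * C))
     \<comment> \<open>compatibility with the pairings\<close>
     \<and> (\<forall>S\<in>Bpu p. \<forall>\<xi>\<in>piG \<iota> ` Egt p. pairing (\<Psi> S) \<xi> = mmul S (\<Phi> \<xi>))"
proof -
  have p0: "p > 0" using p by simp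
  have Phi: "\<Phi> = coord_Egt \<iota>" by (simp add: Phi_def coord_Egt_def fun_eq_iff)
  have Psi: "\<Psi> = embed_Elt \<iota>" by (auto simp: Psi_def embed_Elt_def intro!: ext)
  have "bij_betw (embed_Elt \<iota>) (Bpu p) (embed_Elt \<iota> ` Bpu p)"
    using inj_embed_Elt inj_on_imp_bij_betw inj_on_subset by blast
  moreover have "\<exists>K. \<forall>T\<in>embed_Egt \<iota> ` Bpu p. \<forall>C. bddEgt p T C \<longrightarrow> bddB p (coord_Egt \<iota> T) (K * C)"
    by (intro exI[of _ 1] ballI allI impI) (simp add: bddB_coord_Egt[OF _ p0])
  moreover have "\<exists>K. \<forall>T\<in>embed_Egt \<iota> ` Bpu p. \<forall>C. bddB p (coord_Egt \<iota> T) C \<longrightarrow> bddEgt p T (K * C)"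
    by (intro exI[of _ 1] ballI allI impI) (auto simp: bddEgt_embed_Egt[OF _ p0])
  moreover have "\<exists>K. \<forall>S\<in>Bpu p. \<forall>C. bddB p S C \<longrightarrow> bddElt p (embed_Elt \<iota> S) (K * C)"
    by (intro exI[of _ 1] ballI allI impI) (simp add: bddElt_embed_Elt[OF _ p0])
  moreover have "\<exists>K. \<forall>S\<in>Bpu p. \<forall>C. bddElt p (embed_Elt \<iota> S) C \<longrightarrow> bddB p S (K * C)"
    by (intro exI[of _ 1] ballI allI impI) (metis bddB_coord_Elt[OF _ p0] coord_embed_Elt mult_1)
  moreover have "coord_Egt \<iota> (\<lambda>x y n. c * T x y n + a * T' x y n)
      = (\<lambda>x y. c * coord_Egt \<iota> T x y + a * coord_Egt \<iota> T' x y)" for c a T T'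
    by (simp add: coord_Egt_def)
  moreover have "embed_Elt \<iota> (\<lambda>x y. c * S x y + a * S' x y)
      = (\<lambda>x y n. c * embed_Elt \<iota> S x y n + a * embed_Elt \<iota> S' x y n)" for c a S S'
    by (auto simp: embed_Elt_def intro!: ext)
  ultimately show ?thesis
    unfolding Phi Psi piG_image_Egt[OF p] piL_image_Elt[OF p]
    by (simp add: bij_betw_coord_Egt coord_Egt_ract embed_Elt_mmul pairing_embed_Elt)
qed

end
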